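(* Let $p$ be an admissible linear order on $\mathcal A=L_e\sqcup L_o\sqcup G$, and let $p^t$ be the reverse order. Let $\phi_{p^t}$ be the generalised RSK shape map computed with the order $p^t$ and with the roles of $L_e$ and $L_o$ exchanged (i.e. with $L_e^t=L_o$, $L_o^t=L_e$, and $G$ unchanged). Then for every word $w\in\mathcal A^n$ whose letters from $G$ are pairwise distinct (hence for $\mu_n$-almost every $w$), $\phi_p(w)=\phi_{p^t}(w)^t$, where $\lambda^t$ denotes the transpose of a Young diagram $\lambda$.
   Context: Alphabet: $\mathcal A=L_e\sqcup L_o\sqcup G$ where $L_e=\{x_1,x_2,\dots\}$, $L_o=\{y_1,y_2,\dots\}$ are discrete and $G$ is identified with an interval of $\mathbb R$; $\mu_n=\mu_1^{\otimes n}$ where $\mu_1(\{x_i\})=\alpha_i$, $\mu_1(\{y_j\})=\beta_j$, and $\mu_1$ restricted to $G$ is $\gamma$ times normalized Lebesgue measure, for Thoma parameters $\mathcal P$. An admissible order is a linear order $p$ on $\mathcal A$ for which $G$ is an interval and whose restriction to $G$ is the usual order of reals or its reverse. Generalised RSK (row insertion) w.r.t. an order and a splitting into $L_e$, $L_o$, $G$: to insert a letter $x$ into a tableau $T$: in the first row, if $x\in L_e$ find the leftmost entry strictly greater than $x$; if $x\in L_o\cup G$ find the leftmost entry greater than or equal to $x$; if there is none, append $x$ at the end of the row and stop; otherwise $x$ replaces that entry and the replaced entry is inserted into the second row by the same rule, and so on (an entry bumped out of the last row forms a new row). For $w=z_1\cdots z_n$, $R(w)$ is obtained by inserting $z_1,\dots,z_n$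 successively into the empty tableau, and $\phi_p(w)$ is the shape of $R(w)$. *)

theory Defs
  imports Complex_Main
begin

datatype letter = LE nat | LO nat | GL real

fun is_LE :: "letter \<Rightarrow> bool" where
  "is_LE (LE _) = True" | "is_LE _ = False"
fun is_LO :: "letter \<Rightarrow> bool" where
  "is_LO (LO _) = True" | "is_LO _ = False"
fun is_G :: "letter \<Rightarrow> bool" where
  "is_G (GL _) = True" | "is_G _ = False"

definition admissible :: "letter rel \<Rightarrow> bool" where
  "admissible r \<longleftrightarrow> linear_order r \<and>
     (\<forall>a b c. is_G a \<and> is_G c \<and> (a, b) \<in> r \<and> (b, c) \<in> r \<longrightarrow> is_G b) \<and>
     ((\<forall>s t. (GL s, GL t) \<in> r \<longleftrightarrow> s \<le> t) \<or> (\<forall>s t. (GL s, GL t) \<in> r \<longleftrightarrow> t \<le> s))"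

text \<open>Bumping rule. \<open>strict x\<close> holds iff x lies in the class playing the role of L_e
  (bump the leftmost entry strictly greater than x); otherwise bump the leftmost
  entry greater than or equal to x.\<close>
definition bumps :: "letter rel \<Rightarrow> (letter \<Rightarrow> bool) \<Rightarrow> letter \<Rightarrow> letter \<Rightarrow> bool" where
  "bumps r strict x y \<longleftrightarrow> (if strict x then (x, y) \<in> r \<and> x \<noteq> y else (x, y) \<in> r)"

fun row_ins :: "letter rel \<Rightarrow> (letter \<Rightarrow> bool) \<Rightarrow> letter \<Rightarrow> letter list \<Rightarrow> letter list \<times> letter option" where
  "row_ins r strict x [] = ([x], None)"
| "row_ins r strict x (y # ys) =
     (if bumps r strict x y then (x # ys, Some y)
      else (let (ys', b) = row_ins r strict x ys in (y # ys', b)))"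

fun tab_ins :: "letter rel \<Rightarrow> (letter \<Rightarrow> bool) \<Rightarrow> letter \<Rightarrow> letter list list \<Rightarrow> letter list list" where
  "tab_ins r strict x [] = [[x]]"
| "tab_ins r strict x (row # rows) =
     (case row_ins r strict x row of
        (row', None) \<Rightarrow> row' # rows
      | (row', Some b) \<Rightarrow> row' # tab_ins r strict b rows)"

definition RSK :: "letter rel \<Rightarrow> (letter \<Rightarrow> bool) \<Rightarrow> letter list \<Rightarrow> letter list list" where
  "RSK r strict w = fold (tab_ins r strict) w []"

definition shape :: "letter list list \<Rightarrow> nat list" where
  "shape T = map length T"

definition phi :: "letter rel \<Rightarrow> letter list \<Rightarrow> nat list" where
  "phi r w = shape (RSK r is_LE w)"

definition phi_t :: "letter rel \<Rightarrow> letter list \<Rightarrow> nat list" where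
  "phi_t r w = shape (RSK (r\<inverse>) is_LO w)"

definition conj_part :: "nat list \<Rightarrow> nat list" where
  "conj_part lam = map (\<lambda>i. length (filter (\<lambda>l. i < l) lam)) [0..<fold max lam 0]"

end

theory Submission
  imports Defs "HOL-Library.Multiset"
begin

(* Tag every letter of w with its position. Ordering equal letters by position, increasingly for
   L_e and decreasingly for L_o and G, turns generalised insertion with respect to p into ordinary
   Robinson-Schensted insertion of a word with distinct letters for a strict total order <. The
   same tagging for p^t, with L_e and L_o exchanged, yields exactly the converse order >, except on
   repeated letters of G: both taggings order those decreasingly by position. Admissibility of p is
   used only through linearity.

   For words with distinct letters the claim is a consequence of Greene's theorem. The reading word
   of an insertion tableau is Knuth equivalent to the inserted word, and the largest number of
   letters covered by k increasing subsequences is invariant under Knuth moves. On the reading word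
   of the <-tableau this number is the sum of its first k rows; on the reading word of the
   >-tableau, whose columns are <-increasing and whose rows meet every <-increasing subsequence at
   most once, it is the sum over all rows of min k (row length). These partial sums determine the
   shape of the <-tableau as the conjugate of the shape of the >-tableau. *)

section \<open>Insertion for an arbitrary bumping relation\<close>

(* row_ins, tab_ins and RSK of Defs for an arbitrary alphabet, where B x y means that x bumps y. *)
fun row_insert :: "('a \<Rightarrow> 'a \<Rightarrow> bool) \<Rightarrow> 'a \<Rightarrow> 'a list \<Rightarrow> 'a list \<times> 'a option" where
  "row_insert B x [] = ([x], None)"
| "row_insert B x (y # ys) = (if B x y then (x # ys, Some y)
      else (let (ys', b) = row_insert B x ys in (y # ys', b)))"

fun tab_insert :: "('a \<Rightarrow> 'a \<Rightarrow> bool) \<Rightarrow> 'a \<Rightarrow> 'a list list \<Rightarrow> 'a list list" where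
  "tab_insert B x [] = [[x]]"
| "tab_insert B x (row # rows) =
     (case row_insert B x row of
        (row', None) \<Rightarrow> row' # rows
      | (row', Some b) \<Rightarrow> row' # tab_insert B b rows)"

definition insertion_tableau :: "('a \<Rightarrow> 'a \<Rightarrow> bool) \<Rightarrow> 'a list \<Rightarrow> 'a list list" where
  "insertion_tableau B w = fold (tab_insert B) w []"

lemma row_ins_eq_row_insert: "row_ins r strict x R = row_insert (bumps r strict) x R"
  by (induction R) auto

lemma tab_ins_eq_tab_insert: "tab_ins r strict x T = tab_insert (bumps r strict) x T"
  by (induction T arbitrary: x) (auto simp: row_ins_eq_row_insert split: option.splits prod.splits)

lemma RSK_eq_insertion_tableau: "RSK r strict w = insertion_tableau (bumps r strict) w"
proof -
  have "tab_ins r strict = tab_insert (bumps r strict)"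
    by (intro ext) (simp add: tab_ins_eq_tab_insert)
  then show ?thesis unfolding RSK_def insertion_tableau_def by simp
qed

lemma insertion_tableau_Nil [simp]: "insertion_tableau B [] = []"
  by (simp add: insertion_tableau_def)

lemma insertion_tableau_snoc: "insertion_tableau B (w @ [x]) = tab_insert B x (insertion_tableau B w)"
  by (simp add: insertion_tableau_def)

lemma row_insert_cases:
  obtains (append) "row_insert B x R = (R @ [x], None)" "\<forall>c\<in>set R. \<not> B x c"
  | (bump) a y b where "R = a @ y # b" "row_insert B x R = (a @ x # b, Some y)"
      "\<forall>c\<in>set a. \<not> B x c" "B x y"
proof (induction R arbitrary: thesis)
  case (Cons z R)
  show ?case
  proof (cases "B x z")
    case True
    then show ?thesis using Cons.prems(2)[of "[]"] by simp
  next
    case False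
    show ?thesis
    proof (rule Cons.IH)
      assume "row_insert B x R = (R @ [x], None)" "\<forall>c\<in>set R. \<not> B x c"
      then show ?thesis using False Cons.prems(1) by simp
    next
      fix a y b assume "R = a @ y # b" "row_insert B x R = (a @ x # b, Some y)"
        "\<forall>c\<in>set a. \<not> B x c" "B x y"
      then show ?thesis using False Cons.prems(2)[of "z # a" y b] by simp
    qed
  qed
qed simp

lemma row_insert_map:
  assumes "\<And>a b. B' a b = B (f a) (f b)"
  shows "row_insert B (f x) (map f R) = map_prod (map f) (map_option f) (row_insert B' x R)"
  by (induction R) (auto simp: assms split: prod.splits)

lemma tab_insert_map:
  assumes "\<And>a b. B' a b = B (f a) (f b)"
  shows "tab_insert B (f x) (map (map f) T) = map (map f) (tab_insert B' x T)"
proof (induction T arbitrary: x)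
  case (Cons R T)
  then show ?case
    using row_insert_map[of B' B f x R, OF assms]
    by (cases "row_insert B' x R") (auto split: option.splits)
qed simp

lemma insertion_tableau_map:
  assumes "\<And>a b. B' a b = B (f a) (f b)"
  shows "insertion_tableau B (map f w) = map (map f) (insertion_tableau B' w)"
  by (induction w rule: rev_induct)
    (simp_all add: insertion_tableau_snoc tab_insert_map[of B' B f, OF assms])

lemma row_insert_bumped_mem: "snd (row_insert B x R) = Some y \<Longrightarrow> y \<in> set R"
  by (induction R) (auto split: if_splits prod.splits)

lemma mset_row_insert:
  "mset (fst (row_insert B x R)) + mset_set (set_option (snd (row_insert B x R))) = add_mset x (mset R)"
  by (induction R) (auto split: prod.split)

lemma mset_concat_tab_insert: "mset (concat (tab_insert B x T)) = add_mset x (mset (concat T))"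
proof (induction T arbitrary: x)
  case (Cons R T)
  then show ?case
    using mset_row_insert[of B x R]
    by (cases "row_insert B x R") (auto split: option.splits simp: algebra_simps)
qed simp

lemma mset_concat_insertion_tableau: "mset (concat (insertion_tableau B w)) = mset w"
  by (induction w rule: rev_induct) (simp_all add: insertion_tableau_snoc mset_concat_tab_insert)

lemma set_concat_insertion_tableau: "set (concat (insertion_tableau B w)) = set w"
  by (metis mset_concat_insertion_tableau set_mset_mset)

lemma distinct_concat_insertion_tableau:
  "distinct w \<Longrightarrow> distinct (concat (insertion_tableau B w))"
  by (metis mset_concat_insertion_tableau mset_eq_imp_distinct_iff)

lemma row_insert_cong:
  "(\<And>y. y \<in> set R \<Longrightarrow> B1 x y = B2 x y) \<Longrightarrow> row_insert B1 x R = row_insert B2 x R"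
  by (induction R) auto

lemma tab_insert_cong:
  assumes "\<And>a b. a \<in> A \<Longrightarrow> b \<in> A \<Longrightarrow> B1 a b = B2 a b" "x \<in> A" "set (concat T) \<subseteq> A"
  shows "tab_insert B1 x T = tab_insert B2 x T"
  using assms(2,3)
proof (induction T arbitrary: x)
  case (Cons R T)
  have eq: "row_insert B1 x R = row_insert B2 x R"
    using assms(1) Cons.prems by (intro row_insert_cong) auto
  obtain R' c where ins: "row_insert B1 x R = (R', c)"
    by fastforce
  have "set_option c \<subseteq> A"
    using arg_cong[OF mset_row_insert[of B1 x R], of set_mset] ins Cons.prems by auto
  moreover have "row_insert B2 x R = (R', c)"
    using eq ins by simp
  ultimately show ?case
    using ins Cons by (cases c) auto
qed simp

lemma insertion_tableau_cong:
  "(\<And>a b. a \<in> set w \<Longrightarrow> b \<in> set w \<Longrightarrow> B1 a b = B2 a b) \<Longrightarrow>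
    insertion_tableau B1 w = insertion_tableau B2 w"
proof (induction w rule: rev_induct)
  case (snoc x w)
  have "tab_insert B1 x (insertion_tableau B1 w) = tab_insert B2 x (insertion_tableau B1 w)"
    using snoc.prems set_concat_insertion_tableau[of B1 w]
    by (intro tab_insert_cong[of "set (w @ [x])"]) auto
  then show ?case
    using snoc by (simp add: insertion_tableau_snoc)
qed simp

section \<open>Knuth equivalence\<close>

definition knuth_move :: "('a \<Rightarrow> 'a \<Rightarrow> bool) \<Rightarrow> 'a list \<Rightarrow> 'a list \<Rightarrow> bool" where
  "knuth_move lt w w' \<longleftrightarrow> (\<exists>u v x y z. lt x y \<and> lt y z \<and>
     ((w = u @ [y, x, z] @ v \<and> w' = u @ [y, z, x] @ v) \<or>
      (w = u @ [x, z, y] @ v \<and> w' = u @ [z, x, y] @ v)))"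

abbreviation knuth_equiv :: "('a \<Rightarrow> 'a \<Rightarrow> bool) \<Rightarrow> 'a list \<Rightarrow> 'a list \<Rightarrow> bool" where
  "knuth_equiv lt \<equiv> equivclp (knuth_move lt)"

lemma knuth_move_yxz:
  "lt x y \<Longrightarrow> lt y z \<Longrightarrow> knuth_move lt (u @ [y, x, z] @ v) (u @ [y, z, x] @ v)"
  unfolding knuth_move_def by blast

lemma knuth_move_xzy:
  "lt x y \<Longrightarrow> lt y z \<Longrightarrow> knuth_move lt (u @ [x, z, y] @ v) (u @ [z, x, y] @ v)"
  unfolding knuth_move_def by blast

lemma knuth_move_append:
  assumes "knuth_move lt w w'"
  shows "knuth_move lt (p @ w @ q) (p @ w' @ q)"
proof -
  obtain u v x y z where "lt x y" "lt y z"
    "(w = u @ [y, x, z] @ v \<and> w' = u @ [y, z, x] @ v) \<or>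
     (w = u @ [x, z, y] @ v \<and> w' = u @ [z, x, y] @ v)"
    using assms unfolding knuth_move_def by blast
  then show ?thesis
    unfolding knuth_move_def by (intro exI[of _ "p @ u"] exI[of _ "v @ q"]) auto
qed

lemma knuth_equiv_append:
  "knuth_equiv lt w w' \<Longrightarrow> knuth_equiv lt (p @ w @ q) (p @ w' @ q)"
proof (induction rule: equivclp_induct)
  case (step y z)
  then show ?case
    using knuth_move_append by (metis equivclp_into_equivclp)
qed simp

lemma mset_knuth_equiv: "knuth_equiv lt w w' \<Longrightarrow> mset w = mset w'"
  by (induction rule: equivclp_induct) (auto simp: knuth_move_def add_mset_commute)

lemma knuth_move_converse: "knuth_move (\<lambda>a b. lt b a) w w' = knuth_move lt w' w"
  unfolding knuth_move_def by blast

lemma knuth_equiv_converse: "knuth_equiv (\<lambda>a b. lt b a) = knuth_equiv lt"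
proof -
  have "knuth_move (\<lambda>a b. lt b a) = (knuth_move lt)\<inverse>\<inverse>"
    by (intro ext) (simp only: conversep_iff, rule knuth_move_converse)
  then show ?thesis by simp
qed

definition reading_word :: "'a list list \<Rightarrow> 'a list" where
  "reading_word T = concat (rev T)"

locale strict_total_order =
  fixes lt :: "'a \<Rightarrow> 'a \<Rightarrow> bool"
  assumes lt_irrefl: "\<not> lt a a"
    and lt_trans: "lt a b \<Longrightarrow> lt b c \<Longrightarrow> lt a c"
    and lt_total: "a \<noteq> b \<Longrightarrow> lt a b \<or> lt b a"
begin

lemma lt_asym: "lt a b \<Longrightarrow> \<not> lt b a"
  using lt_irrefl lt_trans by blast

lemma strict_total_order_converse: "strict_total_order (\<lambda>a b. lt b a)"
  by unfold_locales (use lt_irrefl lt_trans lt_total in blast)+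

lemma sorted_nth_less: "sorted_wrt lt R \<Longrightarrow> i < j \<Longrightarrow> j < length R \<Longrightarrow> lt (R!i) (R!j)"
  by (auto simp: sorted_wrt_iff_nth_less)

lemma row_insert_lt_cases:
  assumes "x \<notin> set R"
  obtains (append) "row_insert lt x R = (R @ [x], None)" "\<forall>c\<in>set R. lt c x"
  | (bump) a y b where "R = a @ y # b" "row_insert lt x R = (a @ x # b, Some y)"
      "\<forall>c\<in>set a. lt c x" "lt x y"
  using assms
proof (cases rule: row_insert_cases[of lt x R])
  case append
  have "\<forall>c\<in>set R. lt c x"
    using append(2) assms lt_total by metis
  then show ?thesis using that(1) append(1) by blast
next
  case (bump a y b)
  have "\<forall>c\<in>set a. lt c x"
    using bump(1,3) assms lt_total by (metis Un_iff set_append)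
  then show ?thesis using that(2) bump by blast
qed

definition column_strict :: "'a list \<Rightarrow> 'a list \<Rightarrow> bool" where
  "column_strict R R2 \<longleftrightarrow> length R2 \<le> length R \<and> (\<forall>j<length R2. lt (R!j) (R2!j))"

fun is_tableau :: "'a list list \<Rightarrow> bool" where
  "is_tableau [] = True"
| "is_tableau (R # T) \<longleftrightarrow> R \<noteq> [] \<and> sorted_wrt lt R \<and> is_tableau T \<and>
     (case T of [] \<Rightarrow> True | R2 # _ \<Rightarrow> column_strict R R2)"

lemma column_strict_row_insert:
  assumes "column_strict (a @ y # b) R2" "y \<notin> set R2" "\<forall>c\<in>set a. lt c x" "lt x y"
  shows "column_strict (a @ x # b) (fst (row_insert lt y R2))"
proof -
  let ?R = "a @ y # b" and ?i = "length a"
  have col: "length R2 \<le> length ?R" "\<And>j. j < length R2 \<Longrightarrow> lt (?R!j) (R2!j)"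
    using assms(1) by (auto simp: column_strict_def)
  have new_nth: "(a @ x # b) ! j = (if j = ?i then x else ?R ! j)" for j
    by (auto simp: nth_append nth_Cons')
  have below_y: "lt ((a @ x # b) ! j) y" if "j \<le> ?i" for j
  proof (cases "j = ?i")
    case False
    then have "(a @ x # b) ! j = a ! j" "a ! j \<in> set a"
      using that by (simp_all add: nth_append)
    then show ?thesis using assms(3,4) lt_trans by metis
  qed (simp add: assms(4))
  show ?thesis
    using assms(2)
  proof (cases rule: row_insert_lt_cases)
    case append
    \<comment> \<open>y enters the row below weakly to the left of its old column\<close>
    have "length R2 \<le> ?i"
    proof (rule ccontr)
      assume "\<not> length R2 \<le> ?i"
      then show False using col(2)[of ?i] append(2) lt_asym by (auto simp: nth_append)
    qed
    then show ?thesis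
      using append(1) col below_y[of "length R2"]
      by (auto simp: column_strict_def new_nth nth_append less_Suc_eq)
  next
    case (bump a2 z b2)
    have "length a2 \<le> ?i"
    proof (rule ccontr)
      assume "\<not> length a2 \<le> ?i"
      then show False using col(2)[of ?i] bump(1,3) lt_asym by (auto simp: nth_append)
    qed
    have off_diag: "lt ((a @ x # b) ! j) (R2 ! j)" if "j < length R2" "j \<noteq> length a2" for j
      using col(2)[OF that(1)] assms(4) lt_trans by (cases "j = ?i") (simp_all add: new_nth)
    have new_nth2: "(a2 @ y # b2) ! j = (if j = length a2 then y else R2 ! j)" for j
      using bump(1) by (auto simp: nth_append nth_Cons')
    show ?thesis
      unfolding column_strict_def bump(2) fst_conv
    proof (intro conjI allI impI)
      show "length (a2 @ y # b2) \<le> length (a @ x # b)" using col(1) bump(1) by simp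
      fix j assume "j < length (a2 @ y # b2)"
      then show "lt ((a @ x # b) ! j) ((a2 @ y # b2) ! j)"
        using \<open>length a2 \<le> ?i\<close> below_y[of j] off_diag[of j] bump(1)
        by (cases "j = length a2") (simp_all add: new_nth2)
    qed
  qed
qed

lemma is_tableau_tab_insert:
  assumes "is_tableau T" "x \<notin> set (concat T)" "distinct (concat T)"
  shows "is_tableau (tab_insert lt x T)"
  using assms
proof (induction T arbitrary: x)
  case (Cons R T)
  have R: "R \<noteq> []" "sorted_wrt lt R" "is_tableau T"
    and col: "case T of [] \<Rightarrow> True | R2 # _ \<Rightarrow> column_strict R R2"
    using Cons.prems by auto
  have "x \<notin> set R" using Cons.prems by auto
  then show ?case
  proof (cases rule: row_insert_lt_cases)
    case append
    have "case T of [] \<Rightarrow> True | R2 # _ \<Rightarrow> column_strict (R @ [x]) R2"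
      using col by (auto simp: column_strict_def nth_append split: list.splits)
    then show ?thesis using append R by (simp add: sorted_wrt_append)
  next
    case (bump a y b)
    have sorted: "sorted_wrt lt (a @ x # b)"
      using R(2) bump(1,3,4) lt_trans by (auto simp: sorted_wrt_append)
    have "y \<notin> set (concat T)" "distinct (concat T)"
      using Cons.prems bump(1) by auto
    then have tab: "is_tableau (tab_insert lt y T)"
      using Cons.IH R(3) by blast
    have "case tab_insert lt y T of [] \<Rightarrow> True | R2 # _ \<Rightarrow> column_strict (a @ x # b) R2"
    proof (cases T)
      case Nil
      have "column_strict (a @ y # b) []" by (simp add: column_strict_def)
      then show ?thesis
        using column_strict_row_insert[of a y b "[]" x] bump Nil by simp
    next
      case (Cons R2 T')
      have "column_strict (a @ y # b) R2" "y \<notin> set R2"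
        using col \<open>y \<notin> set (concat T)\<close> bump(1) Cons by auto
      then show ?thesis
        using column_strict_row_insert[of a y b R2 x] bump Cons
        by (auto split: prod.split option.split)
    qed
    then show ?thesis using bump sorted tab by simp
  qed
qed simp

lemma knuth_equiv_move_small_left:
  assumes "lt x y" "\<forall>c\<in>set b. lt y c" "sorted_wrt lt b"
  shows "knuth_equiv lt (y # b @ [x]) (y # x # b)"
  using assms(2,3)
proof (induction b rule: rev_induct)
  case (snoc c b)
  obtain p d where pd: "y # b = p @ [d]"
    by (metis list.discI rev_exhaust)
  have "d = y \<or> d \<in> set b" using pd by (metis last_ConsL last_ConsR last_snoc last_in_set snoc_eq_iff_butlast)
  then have "lt x d" "lt d c"
    using assms(1) snoc.prems lt_trans by (auto simp: sorted_wrt_append)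
  then have "knuth_move lt (p @ [d, x, c]) (p @ [d, c, x])"
    using knuth_move_yxz[of lt x d c p "[]"] by simp
  moreover have "y # b @ [x, c] = p @ [d, x, c]" "y # b @ [c, x] = p @ [d, c, x]"
    using arg_cong[OF pd, of "\<lambda>l. l @ [x, c]"] arg_cong[OF pd, of "\<lambda>l. l @ [c, x]"] by simp_all
  ultimately have "knuth_equiv lt (y # b @ [c, x]) (y # b @ [x, c])"
    by (simp only:) (rule converse_r_into_equivclp)
  moreover have "knuth_equiv lt ([] @ (y # b @ [x]) @ [c]) ([] @ (y # x # b) @ [c])"
    using snoc by (intro knuth_equiv_append) (auto simp: sorted_wrt_append)
  ultimately show ?case
    by (auto intro: equivclp_trans)
qed simp

lemma knuth_equiv_move_large_left:
  assumes "sorted_wrt lt a" "\<forall>c\<in>set a. lt c x" "lt x y"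
  shows "knuth_equiv lt (a @ [y, x]) (y # a @ [x])"
  using assms
proof (induction a arbitrary: x rule: rev_induct)
  case (snoc e a)
  have "lt e x" "lt e y" using snoc.prems lt_trans by auto
  then have move: "knuth_move lt (a @ [e, y, x]) (a @ [y, e, x])"
    using knuth_move_xzy[of lt e x y a "[]"] snoc.prems(3) by simp
  have "knuth_equiv lt (a @ [y, e]) (y # a @ [e])"
    using snoc \<open>lt e y\<close> by (auto simp: sorted_wrt_append)
  then have "knuth_equiv lt ([] @ (a @ [y, e]) @ [x]) ([] @ (y # a @ [e]) @ [x])"
    by (rule knuth_equiv_append)
  then show ?case
    using move by (auto intro: equivclp_trans)
qed simp

lemma row_insert_knuth_equiv:
  assumes "sorted_wrt lt (a @ y # b)" "\<forall>c\<in>set a. lt c x" "lt x y"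
  shows "knuth_equiv lt (a @ y # b @ [x]) (y # a @ x # b)"
proof -
  have "knuth_equiv lt (a @ (y # b @ [x]) @ []) (a @ (y # x # b) @ [])"
    using assms by (intro knuth_equiv_append knuth_equiv_move_small_left) (auto simp: sorted_wrt_append)
  moreover have "knuth_equiv lt ([] @ (a @ [y, x]) @ b) ([] @ (y # a @ [x]) @ b)"
    using assms by (intro knuth_equiv_append knuth_equiv_move_large_left) (auto simp: sorted_wrt_append)
  ultimately show ?thesis by (auto intro: equivclp_trans)
qed

lemma tab_insert_knuth_equiv:
  assumes "\<forall>R\<in>set T. sorted_wrt lt R" "x \<notin> set (concat T)" "distinct (concat T)"
  shows "knuth_equiv lt (reading_word (tab_insert lt x T)) (reading_word T @ [x])"
  using assms
proof (induction T arbitrary: x)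
  case (Cons R T)
  have "x \<notin> set R" using Cons.prems by auto
  then show ?case
  proof (cases rule: row_insert_lt_cases)
    case append
    then show ?thesis by (simp add: reading_word_def)
  next
    case (bump a y b)
    have "knuth_equiv lt (reading_word (tab_insert lt y T)) (reading_word T @ [y])"
      using Cons bump(1) by auto
    then have "knuth_equiv lt ([] @ reading_word (tab_insert lt y T) @ (a @ x # b))
        ([] @ (reading_word T @ [y]) @ (a @ x # b))"
      by (rule knuth_equiv_append)
    moreover have "knuth_equiv lt (reading_word T @ (a @ y # b @ [x]) @ [])
        (reading_word T @ (y # a @ x # b) @ [])"
      using Cons.prems bump by (intro knuth_equiv_append row_insert_knuth_equiv) auto
    ultimately show ?thesis
      using bump by (auto simp: reading_word_def intro: equivclp_trans equivclp_sym)
  qed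
qed (simp add: reading_word_def)

lemma is_tableau_sorted_rows: "is_tableau T \<Longrightarrow> \<forall>R\<in>set T. sorted_wrt lt R"
  by (induction T) auto

lemma insertion_tableau_is_tableau:
  "distinct w \<Longrightarrow> is_tableau (insertion_tableau lt w)"
proof (induction w rule: rev_induct)
  case (snoc x w)
  have "x \<notin> set (concat (insertion_tableau lt w))"
    using snoc.prems set_concat_insertion_tableau[of lt w] by simp
  then show ?case
    unfolding insertion_tableau_snoc using snoc
    by (intro is_tableau_tab_insert distinct_concat_insertion_tableau) simp_all
qed simp

lemma insertion_tableau_knuth_equiv:
  "distinct w \<Longrightarrow> knuth_equiv lt (reading_word (insertion_tableau lt w)) w"
proof (induction w rule: rev_induct)
  case (snoc x w)
  have "knuth_equiv lt (reading_word (insertion_tableau lt (w @ [x])))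
      (reading_word (insertion_tableau lt w) @ [x])"
    unfolding insertion_tableau_snoc using snoc.prems
    by (intro tab_insert_knuth_equiv is_tableau_sorted_rows insertion_tableau_is_tableau
        distinct_concat_insertion_tableau)
      (use set_concat_insertion_tableau[of lt w] in simp_all)
  moreover have "knuth_equiv lt ([] @ reading_word (insertion_tableau lt w) @ [x]) ([] @ w @ [x])"
    using snoc by (intro knuth_equiv_append) simp
  ultimately show ?case by (auto intro: equivclp_trans)
qed (simp add: reading_word_def)

end

section \<open>Greene's invariant\<close>

definition is_chain :: "('a \<Rightarrow> 'a \<Rightarrow> bool) \<Rightarrow> 'a list \<Rightarrow> 'a set \<Rightarrow> bool" where
  "is_chain lt u S \<longleftrightarrow> sorted_wrt lt (filter (\<lambda>a. a \<in> S) u)"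

definition chain_union :: "('a \<Rightarrow> 'a \<Rightarrow> bool) \<Rightarrow> nat \<Rightarrow> 'a list \<Rightarrow> 'a set \<Rightarrow> bool" where
  "chain_union lt k u T \<longleftrightarrow> (\<exists>C. (\<forall>i<k. is_chain lt u (C i)) \<and> T = set u \<inter> (\<Union>i<k. C i))"

definition greene :: "('a \<Rightarrow> 'a \<Rightarrow> bool) \<Rightarrow> nat \<Rightarrow> 'a list \<Rightarrow> nat" where
  "greene lt k u = Max (card ` {T. chain_union lt k u T})"

lemma is_chain_subset: "is_chain lt u S \<Longrightarrow> S' \<subseteq> S \<Longrightarrow> is_chain lt u S'"
proof -
  assume "is_chain lt u S" "S' \<subseteq> S"
  moreover have "filter (\<lambda>a. a \<in> S') u = filter (\<lambda>a. a \<in> S') (filter (\<lambda>a. a \<in> S) u)"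
    using \<open>S' \<subseteq> S\<close> by (auto simp: filter_filter intro: filter_cong)
  ultimately show ?thesis unfolding is_chain_def by (metis sorted_wrt_filter)
qed

lemma is_chain_rev: "is_chain (\<lambda>a b. lt b a) (rev u) S = is_chain lt u S"
  by (simp add: is_chain_def rev_filter[symmetric] sorted_wrt_rev)

lemma chain_union_rev: "chain_union (\<lambda>a b. lt b a) k (rev u) T = chain_union lt k u T"
  by (simp add: chain_union_def is_chain_rev)

lemma greene_rev: "greene (\<lambda>a b. lt b a) k (rev u) = greene lt k u"
  by (simp add: greene_def chain_union_rev)

lemma finite_chain_unions: "finite {T. chain_union lt k u T}"
  by (rule finite_subset[of _ "Pow (set u)"]) (auto simp: chain_union_def)

lemma card_le_greene: "chain_union lt k u T \<Longrightarrow> card T \<le> greene lt k u"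
  unfolding greene_def using finite_chain_unions by (intro Max_ge) auto

lemma card_family_le_greene:
  "\<forall>i<k. is_chain lt u (C i) \<Longrightarrow> card (set u \<inter> (\<Union>i<k. C i)) \<le> greene lt k u"
  by (rule card_le_greene) (auto simp: chain_union_def)

lemma greene_attained:
  obtains T where "chain_union lt k u T" "card T = greene lt k u"
proof -
  have "chain_union lt k u {}"
    unfolding chain_union_def by (rule exI[of _ "\<lambda>_. {}"]) (simp add: is_chain_def)
  then have "greene lt k u \<in> card ` {T. chain_union lt k u T}"
    unfolding greene_def using finite_chain_unions by (intro Max_in) auto
  then obtain T where "chain_union lt k u T" "card T = greene lt k u"
    by auto
  then show ?thesis by (rule that)
qed

lemma greene_mono_chains:
  assumes "set u' = set u" "\<And>S. is_chain lt u S \<Longrightarrow> is_chain lt u' S"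
  shows "greene lt k u \<le> greene lt k u'"
proof -
  obtain T where "chain_union lt k u T" "card T = greene lt k u"
    by (rule greene_attained)
  moreover from this(1) have "chain_union lt k u' T"
    using assms unfolding chain_union_def by metis
  ultimately show ?thesis using card_le_greene by metis
qed

lemma chain_union_disjoint_family:
  assumes "chain_union lt k u T"
  obtains C where "\<forall>i<k. is_chain lt u (C i)" "T = set u \<inter> (\<Union>i<k. C i)"
    "\<forall>i<k. \<forall>j<k. i \<noteq> j \<longrightarrow> C i \<inter> C j = {}"
proof -
  obtain C where C: "\<forall>i<k. is_chain lt u (C i)" "T = set u \<inter> (\<Union>i<k. C i)"
    using assms unfolding chain_union_def by blast
  define D where "D i = C i - (\<Union>j<i. C j)" for i
  have "(\<Union>i<k. D i) = (\<Union>i<k. C i)"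
  proof
    show "(\<Union>i<k. C i) \<subseteq> (\<Union>i<k. D i)"
    proof
      fix a assume "a \<in> (\<Union>i<k. C i)"
      then obtain i where "i < k" "a \<in> C i" by auto
      moreover define i0 where "i0 = (LEAST i. a \<in> C i)"
      ultimately have "a \<in> C i0" "i0 \<le> i" "\<forall>j<i0. a \<notin> C j"
        using LeastI[of "\<lambda>i. a \<in> C i"] Least_le[of "\<lambda>i. a \<in> C i"] not_less_Least by blast+
      then show "a \<in> (\<Union>i<k. D i)" using \<open>i < k\<close> unfolding D_def by auto
    qed
  qed (auto simp: D_def)
  moreover have "\<forall>i<k. is_chain lt u (D i)"
    using C(1) is_chain_subset unfolding D_def by blast
  moreover have "D i \<inter> D j = {}" if "i \<noteq> j" for i j
    using that unfolding D_def by (cases "i < j") auto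
  ultimately show ?thesis using that C(2) by auto
qed

lemma filter_mem_cong: "(\<And>a. a \<in> set l \<Longrightarrow> a \<in> S \<longleftrightarrow> a \<in> S') \<Longrightarrow>
    filter (\<lambda>a. a \<in> S) l = filter (\<lambda>a. a \<in> S') l"
  by (rule filter_cong) auto

lemma is_chain_middle: "is_chain lt (p @ m @ q) S \<Longrightarrow> sorted_wrt lt (filter (\<lambda>a. a \<in> S) m)"
  unfolding is_chain_def filter_append sorted_wrt_append by simp

lemma is_chain_middle_cong: "filter (\<lambda>a. a \<in> S) m = filter (\<lambda>a. a \<in> S) m' \<Longrightarrow>
    is_chain lt (p @ m @ q) S = is_chain lt (p @ m' @ q) S"
  unfolding is_chain_def filter_append by simp

lemma is_chain_by_parts:
  "sorted_wrt lt (filter (\<lambda>a. a \<in> S) p @ filter (\<lambda>a. a \<in> S) m @ filter (\<lambda>a. a \<in> S) q) \<Longrightarrow>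
    is_chain lt (p @ m @ q) S"
  unfolding is_chain_def by simp

context strict_total_order
begin

lemma is_chain_yxz_not_yx:
  assumes "is_chain lt (p @ [y, x, z] @ q) S" "lt x y" "x \<in> S" "y \<in> S"
  shows False
  using is_chain_middle[OF assms(1)] assms(2-4) lt_asym by simp

lemma is_chain_swap:
  assumes "is_chain lt (p @ [y, x, z] @ q) S" "\<not> (x \<in> S \<and> z \<in> S)"
  shows "is_chain lt (p @ [y, z, x] @ q) S"
proof -
  have "filter (\<lambda>a. a \<in> S) [y, x, z] = filter (\<lambda>a. a \<in> S) [y, z, x]"
    using assms(2) by auto
  then show ?thesis using assms(1) is_chain_middle_cong by metis
qed

lemma is_chain_unswap:
  assumes "is_chain lt (p @ [y, z, x] @ q) S" "lt x z"
  shows "is_chain lt (p @ [y, x, z] @ q) S"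
proof -
  have "\<not> (x \<in> S \<and> z \<in> S)"
    using is_chain_middle[OF assms(1)] assms(2) lt_asym by (cases "y \<in> S") auto
  then have "filter (\<lambda>a. a \<in> S) [y, z, x] = filter (\<lambda>a. a \<in> S) [y, x, z]"
    by auto
  then show ?thesis using assms(1) is_chain_middle_cong by metis
qed

lemma sorted_wrt_replace:
  "sorted_wrt lt (A @ [x, z] @ B) \<Longrightarrow> lt x y \<Longrightarrow> lt y z \<Longrightarrow> sorted_wrt lt (A @ [y, z] @ B)"
  by (simp add: sorted_wrt_append) (meson lt_trans)

lemma sorted_wrt_exchange:
  assumes "sorted_wrt lt (A1 @ [x, z] @ B1)" "sorted_wrt lt (A2 @ [y] @ B2)" "lt x y" "lt y z"
  shows "sorted_wrt lt (A2 @ [y, z] @ B1)" "sorted_wrt lt (A1 @ [x] @ B2)"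
  using assms by (simp_all add: sorted_wrt_append) (meson lt_trans)+

lemma is_chain_replace:
  assumes "distinct (p @ [y, x, z] @ q)" "lt x y" "lt y z"
    and "is_chain lt (p @ [y, x, z] @ q) S" "x \<in> S" "z \<in> S"
  shows "is_chain lt (p @ [y, z, x] @ q) (insert y (S - {x}))"
proof (rule is_chain_by_parts)
  let ?S' = "insert y (S - {x})"
  have "y \<notin> S" using is_chain_yxz_not_yx assms by blast
  have "filter (\<lambda>a. a \<in> ?S') l = filter (\<lambda>a. a \<in> S) l" if "l = p \<or> l = q" for l
    using assms(1) that by (intro filter_mem_cong) auto
  moreover have "filter (\<lambda>a. a \<in> ?S') [y, z, x] = [y, z]"
    using assms(1,6) by auto
  moreover have "sorted_wrt lt (filter (\<lambda>a. a \<in> S) p @ [x, z] @ filter (\<lambda>a. a \<in> S) q)"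
    using assms(4-6) \<open>y \<notin> S\<close> unfolding is_chain_def by simp
  ultimately show "sorted_wrt lt (filter (\<lambda>a. a \<in> ?S') p @ filter (\<lambda>a. a \<in> ?S') [y, z, x] @
      filter (\<lambda>a. a \<in> ?S') q)"
    using sorted_wrt_replace assms(2,3) by metis
qed

lemma is_chain_exchange:
  assumes "distinct (p @ [y, x, z] @ q)" "lt x y" "lt y z"
    and "is_chain lt (p @ [y, x, z] @ q) S1" "x \<in> S1" "z \<in> S1"
    and "is_chain lt (p @ [y, x, z] @ q) S2" "y \<in> S2" "x \<notin> S2" "z \<notin> S2"
  shows "is_chain lt (p @ [y, z, x] @ q) (S2 \<inter> set p \<union> {y, z} \<union> S1 \<inter> set q)"
    and "is_chain lt (p @ [y, z, x] @ q) (S1 \<inter> set p \<union> {x} \<union> S2 \<inter> set q)"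
proof -
  have "y \<notin> S1" using is_chain_yxz_not_yx assms by blast
  have flt_p: "filter (\<lambda>a. a \<in> A \<inter> set p \<union> B \<union> C \<inter> set q) p = filter (\<lambda>a. a \<in> A) p"
    and flt_q: "filter (\<lambda>a. a \<in> A \<inter> set p \<union> B \<union> C \<inter> set q) q = filter (\<lambda>a. a \<in> C) q"
    if "B \<subseteq> {x, y, z}" for A B C
    using assms(1) that by (intro filter_mem_cong; auto)+
  have "sorted_wrt lt (filter (\<lambda>a. a \<in> S1) p @ [x, z] @ filter (\<lambda>a. a \<in> S1) q)"
    and "sorted_wrt lt (filter (\<lambda>a. a \<in> S2) p @ [y] @ filter (\<lambda>a. a \<in> S2) q)"
    using assms(4-10) \<open>y \<notin> S1\<close> unfolding is_chain_def by simp_all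
  note sorted = sorted_wrt_exchange[OF this assms(2,3)]
  have sub: "{y, z} \<subseteq> {x, y, z}" "{x} \<subseteq> {x, y, z}" by auto
  have mid: "filter (\<lambda>a. a \<in> S2 \<inter> set p \<union> {y, z} \<union> S1 \<inter> set q) [y, z, x] = [y, z]"
    "filter (\<lambda>a. a \<in> S1 \<inter> set p \<union> {x} \<union> S2 \<inter> set q) [y, z, x] = [x]"
    using assms(1) by auto
  show "is_chain lt (p @ [y, z, x] @ q) (S2 \<inter> set p \<union> {y, z} \<union> S1 \<inter> set q)"
    by (rule is_chain_by_parts) (simp only: flt_p[OF sub(1)] flt_q[OF sub(1)] mid(1) sorted(1))
  show "is_chain lt (p @ [y, z, x] @ q) (S1 \<inter> set p \<union> {x} \<union> S2 \<inter> set q)"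
    by (rule is_chain_by_parts) (simp only: flt_p[OF sub(2)] flt_q[OF sub(2)] mid(2) sorted(2))
qed

lemma chain_family_transport_xz:
  assumes dist: "distinct (p @ [y, x, z] @ q)" and xy: "lt x y" and yz: "lt y z"
    and C: "\<forall>l<k. is_chain lt (p @ [y, x, z] @ q) (C l)" "\<forall>l<k. \<forall>j<k. l \<noteq> j \<longrightarrow> C l \<inter> C j = {}"
    and i: "i < k" "x \<in> C i" "z \<in> C i"
  shows "\<exists>D. (\<forall>l<k. is_chain lt (p @ [y, z, x] @ q) (D l)) \<and>
    card (set (p @ [y, x, z] @ q) \<inter> (\<Union>l<k. C l)) \<le> card (set (p @ [y, z, x] @ q) \<inter> (\<Union>l<k. D l))"
proof -
  let ?u = "p @ [y, x, z] @ q" and ?u' = "p @ [y, z, x] @ q"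
  let ?T = "set ?u \<inter> (\<Union>l<k. C l)"
  have y_notin: "y \<notin> C i"
    using is_chain_yxz_not_yx C(1) i xy by blast
  have others: "is_chain lt ?u' (C j)" if "j < k" "j \<noteq> i" for j
    using C i that is_chain_swap by blast
  show ?thesis
  proof (cases "\<exists>j<k. y \<in> C j")
    case True
    then obtain j where j: "j < k" "y \<in> C j" by blast
    then have "j \<noteq> i" and xz_notin: "x \<notin> C j" "z \<notin> C j"
      using y_notin C(2) i by blast+
    define D where "D = C(i := C j \<inter> set p \<union> {y, z} \<union> C i \<inter> set q,
      j := C i \<inter> set p \<union> {x} \<union> C j \<inter> set q)"
    have "\<forall>l<k. is_chain lt ?u' (D l)"
      using is_chain_exchange[OF dist xy yz C(1)[rule_format, OF i(1)] i(2,3)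
          C(1)[rule_format, OF j(1)] j(2) xz_notin] \<open>j \<noteq> i\<close> others
      unfolding D_def by auto
    moreover have "?T \<subseteq> set ?u' \<inter> (\<Union>l<k. D l)"
      using i(1) j(1) \<open>j \<noteq> i\<close> unfolding D_def by (auto split: if_splits)
    then have "card ?T \<le> card (set ?u' \<inter> (\<Union>l<k. D l))"
      by (intro card_mono) auto
    ultimately show ?thesis by blast
  next
    case False
    define D where "D = C(i := insert y (C i - {x}))"
    have "\<forall>l<k. is_chain lt ?u' (D l)"
      using is_chain_replace[OF dist xy yz] C(1) i others unfolding D_def by auto
    moreover have "insert y (?T - {x}) \<subseteq> set ?u' \<inter> (\<Union>l<k. D l)"
      using i unfolding D_def by (auto split: if_splits)
    moreover have "x \<in> ?T" "y \<notin> ?T" "finite ?T"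
      using False i by auto
    then have "card (insert y (?T - {x})) = card ?T"
      by (metis DiffD1 card_Suc_Diff1 card_insert_disjoint finite_Diff)
    ultimately show ?thesis
      by (metis card_mono finite_Int List.finite_set)
  qed
qed

lemma greene_yxz_le_yzx:
  assumes dist: "distinct (p @ [y, x, z] @ q)" and xy: "lt x y" and yz: "lt y z"
  shows "greene lt k (p @ [y, x, z] @ q) \<le> greene lt k (p @ [y, z, x] @ q)"
proof -
  let ?u = "p @ [y, x, z] @ q" and ?u' = "p @ [y, z, x] @ q"
  obtain T where T: "chain_union lt k ?u T" "card T = greene lt k ?u"
    by (rule greene_attained)
  obtain C where C: "\<forall>i<k. is_chain lt ?u (C i)" "T = set ?u \<inter> (\<Union>i<k. C i)"
    "\<forall>i<k. \<forall>j<k. i \<noteq> j \<longrightarrow> C i \<inter> C j = {}"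
    using T(1) by (rule chain_union_disjoint_family)
  have "\<exists>D. (\<forall>i<k. is_chain lt ?u' (D i)) \<and> card T \<le> card (set ?u' \<inter> (\<Union>i<k. D i))"
  proof (cases "\<exists>i<k. x \<in> C i \<and> z \<in> C i")
    case False
    then have "set ?u' = set ?u" "\<forall>i<k. is_chain lt ?u' (C i)"
      using C(1) is_chain_swap by auto
    then show ?thesis using C(2) by (intro exI[of _ C]) simp
  next
    case True
    then show ?thesis
      using chain_family_transport_xz[OF dist xy yz C(1,3)] C(2) by blast
  qed
  then show ?thesis
    using card_family_le_greene T(2) by (metis le_trans)
qed

lemma greene_yxz_eq_yzx:
  assumes "distinct (p @ [y, x, z] @ q)" "lt x y" "lt y z"
  shows "greene lt k (p @ [y, x, z] @ q) = greene lt k (p @ [y, z, x] @ q)"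
proof (rule antisym)
  show "greene lt k (p @ [y, z, x] @ q) \<le> greene lt k (p @ [y, x, z] @ q)"
    using is_chain_unswap assms(2,3) lt_trans by (intro greene_mono_chains) auto
qed (rule greene_yxz_le_yzx[OF assms])

lemma greene_knuth_move:
  assumes "knuth_move lt w w'" "distinct w"
  shows "greene lt k w = greene lt k w'"
proof -
  obtain p q x y z where xyz: "lt x y" "lt y z" and
    "(w = p @ [y, x, z] @ q \<and> w' = p @ [y, z, x] @ q) \<or>
     (w = p @ [x, z, y] @ q \<and> w' = p @ [z, x, y] @ q)"
    using assms(1) unfolding knuth_move_def by blast
  then show ?thesis
  proof (elim disjE conjE)
    assume "w = p @ [y, x, z] @ q" "w' = p @ [y, z, x] @ q"
    then show ?thesis using greene_yxz_eq_yzx xyz assms(2) by simp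
  next
    assume w: "w = p @ [x, z, y] @ q" "w' = p @ [z, x, y] @ q"
    \<comment> \<open>read backwards, this is a move of the first kind for the converse order\<close>
    interpret converse: strict_total_order "\<lambda>a b. lt b a" by (rule strict_total_order_converse)
    have "greene (\<lambda>a b. lt b a) k (rev q @ [y, z, x] @ rev p) =
        greene (\<lambda>a b. lt b a) k (rev q @ [y, x, z] @ rev p)"
      using converse.greene_yxz_eq_yzx[of "rev q" y z x "rev p"] xyz assms(2) w by auto
    then show ?thesis
      using greene_rev[of lt k w] greene_rev[of lt k w'] w by simp
  qed
qed

lemma greene_knuth_equiv:
  assumes "knuth_equiv lt w w'" "distinct w"
  shows "greene lt k w = greene lt k w'"
  using assms
proof (induction rule: equivclp_induct)
  case (step w1 w2)
  have "distinct w1"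
    using mset_knuth_equiv[OF step.hyps(1)] step.prems by (metis mset_eq_imp_distinct_iff)
  moreover have "distinct w2" if "knuth_move lt w2 w1"
    using mset_knuth_equiv[of lt w2 w1] that \<open>distinct w1\<close> by (metis mset_eq_imp_distinct_iff r_into_equivclp)
  ultimately show ?case
    using step greene_knuth_move by metis
qed simp

end

definition cells :: "'a list list \<Rightarrow> (nat \<times> nat) set" where
  "cells P = {(i, j). i < length P \<and> j < length (P ! i)}"

definition entry :: "'a list list \<Rightarrow> nat \<times> nat \<Rightarrow> 'a" where
  "entry P c = P ! fst c ! snd c"

lemma cells_Sigma: "cells P = (SIGMA i:{..<length P}. {..<length (P ! i)})"
  by (auto simp: cells_def)

lemma finite_cells: "finite (cells P)"
  by (simp add: cells_Sigma)

lemma entry_cells: "entry P ` cells P = set (concat P)"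
proof
  show "set (concat P) \<subseteq> entry P ` cells P"
  proof
    fix t assume "t \<in> set (concat P)"
    then obtain R where "R \<in> set P" "t \<in> set R" by auto
    then obtain i j where "i < length P" "R = P ! i" "j < length R" "t = R ! j"
      by (metis in_set_conv_nth)
    then show "t \<in> entry P ` cells P"
      by (auto simp: cells_def entry_def intro!: image_eqI[of _ _ "(i, j)"])
  qed
qed (auto simp: cells_def entry_def intro: nth_mem)

lemma inj_on_entry: "distinct (concat P) \<Longrightarrow> inj_on (entry P) (cells P)"
proof (induction P)
  case (Cons R P)
  have R: "distinct R" "set R \<inter> set (concat P) = {}" and P: "inj_on (entry P) (cells P)"
    using Cons by auto
  have not_in_R: "P ! m ! j \<notin> set R" if "m < length P" "j < length (P ! m)" for m j
    using that R(2) entry_cells[of P] by (force simp: cells_def entry_def)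
  show ?case
  proof (rule inj_onI, clarify)
    fix i j i' j'
    assume c: "(i, j) \<in> cells (R # P)" "(i', j') \<in> cells (R # P)"
      and eq: "entry (R # P) (i, j) = entry (R # P) (i', j')"
    show "i = i' \<and> j = j'"
    proof (cases i; cases i')
      assume "i = 0" "i' = 0"
      then show ?thesis using c eq R(1) by (simp add: cells_def entry_def nth_eq_iff_index_eq)
    next
      fix m' assume "i = 0" "i' = Suc m'"
      then show ?thesis using c eq not_in_R[of m' j'] nth_mem[of j R] by (auto simp: cells_def entry_def)
    next
      fix m assume "i = Suc m" "i' = 0"
      then show ?thesis using c eq not_in_R[of m j] nth_mem[of j' R] by (auto simp: cells_def entry_def)
    next
      fix m m' assume "i = Suc m" "i' = Suc m'"
      then show ?thesis using c eq P by (auto simp: cells_def entry_def inj_on_def)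
    qed
  qed
qed (simp add: cells_def)

lemma card_cells_first_rows:
  "card {c \<in> cells P. fst c < k} = (\<Sum>i<min k (length P). length (P ! i))"
proof -
  have "{c \<in> cells P. fst c < k} = (SIGMA i:{..<min k (length P)}. {..<length (P ! i)})"
    by (auto simp: cells_def)
  then show ?thesis by simp
qed

lemma card_cells_first_columns:
  "card {c \<in> cells P. snd c < k} = (\<Sum>i<length P. min k (length (P ! i)))"
proof -
  have "{c \<in> cells P. snd c < k} = (SIGMA i:{..<length P}. {..<min k (length (P ! i))})"
    by (auto simp: cells_def)
  then show ?thesis by simp
qed

lemma card_eq_sum_fst_fibres:
  assumes "finite X" "fst ` X \<subseteq> A" "finite A"
  shows "card X = (\<Sum>i\<in>A. card {j. (i, j) \<in> X})"
proof -
  have "X = (SIGMA i:A. {j. (i, j) \<in> X})" using assms(2) by auto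
  moreover have "finite {j. (i, j) \<in> X}" for i
    using finite_imageI[OF assms(1), of snd] by (rule finite_subset[rotated]) force
  ultimately show ?thesis using assms(3) card_SigmaI by (metis (no_types))
qed

lemma card_eq_sum_snd_fibres:
  assumes "finite X" "snd ` X \<subseteq> B" "finite B"
  shows "card X = (\<Sum>j\<in>B. card {i. (i, j) \<in> X})"
proof -
  have fibre: "{i. (j, i) \<in> prod.swap ` X} = {i. (i, j) \<in> X}" for j
    by force
  have "card X = card (prod.swap ` X)" by (simp add: card_image)
  also have "\<dots> = (\<Sum>j\<in>B. card {i. (j, i) \<in> prod.swap ` X})"
    using assms by (intro card_eq_sum_fst_fibres) force+
  finally show ?thesis by (simp only: fibre)
qed

lemma card_le_of_cover_by_subsingletons:
  assumes "finite X" "X \<subseteq> (\<Union>l<k. A l)"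
    and "\<And>l a b. l < k \<Longrightarrow> a \<in> A l \<inter> X \<Longrightarrow> b \<in> A l \<inter> X \<Longrightarrow> a = b"
  shows "card X \<le> k"
proof -
  have "X = (\<Union>l<k. A l \<inter> X)"
    using assms(2) by blast
  then have "card X \<le> (\<Sum>l<k. card (A l \<inter> X))"
    by (metis card_UN_le finite_lessThan)
  also have "\<dots> \<le> (\<Sum>l<k. 1)"
    using assms(1,3) by (intro sum_mono) (simp add: card_le_Suc0_iff_eq)
  finally show ?thesis by simp
qed

lemma down_closed_eq_lessThan:
  assumes "finite C" "\<And>i i'. i < i' \<Longrightarrow> i' \<in> C \<Longrightarrow> i \<in> C"
  shows "C = {..<card C}"
proof (cases "C = {}")
  case False
  then have "Max C \<in> C" using assms(1) by simp
  then have "C = {..Max C}"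
    using assms by (auto simp: le_less intro: Max_ge)
  then show ?thesis by (metis card_atMost lessThan_Suc_atMost)
qed simp

definition precedes :: "'a list \<Rightarrow> 'a \<Rightarrow> 'a \<Rightarrow> bool" where
  "precedes u a b \<longleftrightarrow> (\<exists>ys zs. u = ys @ zs \<and> a \<in> set ys \<and> b \<in> set zs)"

lemma precedes_asym:
  assumes "distinct u" "precedes u a b"
  shows "\<not> precedes u b a"
proof
  assume "precedes u b a"
  then obtain ys' zs' where u': "u = ys' @ zs'" "b \<in> set ys'" "a \<in> set zs'"
    unfolding precedes_def by blast
  obtain ys zs where u: "u = ys @ zs" "a \<in> set ys" "b \<in> set zs"
    using assms(2) unfolding precedes_def by blast
  from u(1) u'(1) obtain us where "ys = ys' @ us \<and> us @ zs = zs' \<or> ys @ us = ys' \<and> zs = us @ zs'"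
    by (auto simp: append_eq_append_conv2)
  then show False
    using assms(1) u u' by auto
qed

lemma is_chain_precedes:
  "is_chain lt u S \<Longrightarrow> precedes u a b \<Longrightarrow> a \<in> S \<Longrightarrow> b \<in> S \<Longrightarrow> lt a b"
  unfolding is_chain_def precedes_def by (auto simp: sorted_wrt_append)

lemma is_chainI:
  "(\<And>a b. precedes u a b \<Longrightarrow> a \<in> S \<Longrightarrow> b \<in> S \<Longrightarrow> lt a b) \<Longrightarrow> is_chain lt u S"
proof (induction u)
  case (Cons c u)
  have "is_chain lt u S"
  proof (rule Cons.IH)
    fix a b assume "precedes u a b" "a \<in> S" "b \<in> S"
    then obtain ys zs where "u = ys @ zs" "a \<in> set ys" "b \<in> set zs"
      unfolding precedes_def by blast
    then have "precedes (c # u) a b"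
      unfolding precedes_def by (intro exI[of _ "c # ys"] exI[of _ zs]) simp
    then show "lt a b" using Cons.prems \<open>a \<in> S\<close> \<open>b \<in> S\<close> by blast
  qed
  moreover have "precedes (c # u) c b" if "b \<in> set u" for b
    unfolding precedes_def using that by (intro exI[of _ "[c]"] exI[of _ u]) simp
  ultimately show ?case
    using Cons.prems by (auto simp: is_chain_def)
qed (simp add: is_chain_def)

lemma precedes_reading_word_rows:
  assumes "i < i'" "i' < length P" "b \<in> set (P ! i')" "a \<in> set (P ! i)"
  shows "precedes (reading_word P) b a"
proof -
  have "rev P = rev (take i' P @ drop i' P)" by simp
  then have "reading_word P = concat (rev (drop i' P)) @ concat (rev (take i' P))"
    unfolding reading_word_def by (simp only: rev_append concat_append)
  moreover have "P ! i' \<in> set (drop i' P)" "P ! i \<in> set (take i' P)"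
    using nth_mem[of 0 "drop i' P"] nth_mem[of i "take i' P"] assms(1,2) by simp_all
  ultimately show ?thesis
    unfolding precedes_def using assms(3,4) by fastforce
qed

lemma precedes_reading_word_row:
  assumes "i < length P" "j1 < j2" "j2 < length (P ! i)"
  shows "precedes (reading_word P) (P ! i ! j1) (P ! i ! j2)"
proof -
  obtain A R B where P: "P = A @ R # B" and R: "P ! i = R"
    using id_take_nth_drop[OF assms(1)] by blast
  have "reading_word P = (concat (rev B) @ take j2 R) @ (drop j2 R @ concat (rev A))"
    unfolding P reading_word_def by simp
  moreover have "R ! j1 \<in> set (concat (rev B) @ take j2 R)"
    "R ! j2 \<in> set (drop j2 R @ concat (rev A))"
    using nth_mem[of j1 "take j2 R"] nth_mem[of 0 "drop j2 R"] assms(2,3) R by simp_all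
  ultimately show ?thesis
    unfolding precedes_def R by blast
qed

lemma card_chain_union_eq_card_cells:
  assumes "chain_union lt k (reading_word P) T" "distinct (concat P)"
  shows "card T = card {c \<in> cells P. entry P c \<in> T}"
proof -
  have "T \<subseteq> entry P ` cells P"
    using assms(1) entry_cells[of P] by (auto simp: chain_union_def reading_word_def)
  then have "T = entry P ` {c \<in> cells P. entry P c \<in> T}" by blast
  moreover have "inj_on (entry P) {c \<in> cells P. entry P c \<in> T}"
    using inj_on_entry[OF assms(2)] by (rule inj_on_subset) blast
  ultimately show ?thesis by (metis card_image)
qed

context strict_total_order
begin

lemma is_tableau_row: "is_tableau P \<Longrightarrow> i < length P \<Longrightarrow> P ! i \<noteq> [] \<and> sorted_wrt lt (P ! i)"
proof (induction P arbitrary: i)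
  case (Cons R P)
  then show ?case by (cases i) auto
qed simp

lemma is_tableau_column_strict:
  "is_tableau P \<Longrightarrow> Suc i < length P \<Longrightarrow> column_strict (P ! i) (P ! Suc i)"
proof (induction P arbitrary: i)
  case (Cons R P)
  then show ?case by (cases i) (auto split: list.splits)
qed simp

lemma is_tableau_column_less:
  assumes "is_tableau P" "i < i'" "i' < length P" "j < length (P ! i')"
  shows "j < length (P ! i) \<and> lt (P ! i ! j) (P ! i' ! j)"
  using assms(2-4)
proof (induction i' arbitrary: j)
  case (Suc i')
  have "j < length (P ! i')" "lt (P ! i' ! j) (P ! Suc i' ! j)"
    using is_tableau_column_strict[OF assms(1), of i'] Suc.prems by (auto simp: column_strict_def)
  then show ?case
    using Suc lt_trans by (cases "i = i'") fastforce+
qed simp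

lemma row_is_chain:
  assumes "is_tableau P" "distinct (concat P)" "i < length P"
  shows "is_chain lt (reading_word P) (set (P ! i))"
proof (rule is_chainI)
  fix a b assume prec: "precedes (reading_word P) a b" "a \<in> set (P ! i)" "b \<in> set (P ! i)"
  obtain j1 j2 where j: "j1 < length (P ! i)" "a = P ! i ! j1" "j2 < length (P ! i)" "b = P ! i ! j2"
    using prec(2,3) by (auto simp: in_set_conv_nth)
  have d: "distinct (reading_word P)"
    using assms(2) by (simp add: reading_word_def)
  show "lt a b"
  proof (cases j1 j2 rule: linorder_cases)
    case less
    then show ?thesis using sorted_nth_less is_tableau_row[OF assms(1,3)] j by simp
  next
    case equal
    then show ?thesis using precedes_asym[OF d prec(1)] prec(1) j by simp
  next
    case greater
    then show ?thesis
      using precedes_asym[OF d precedes_reading_word_row[OF assms(3) greater j(1)]] prec(1) j by simp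
  qed
qed

lemma column_is_converse_chain:
  assumes "is_tableau P" "distinct (concat P)"
  shows "is_chain (\<lambda>a b. lt b a) (reading_word P) (entry P ` {c \<in> cells P. snd c = j})"
proof (rule is_chainI)
  fix a b assume prec: "precedes (reading_word P) a b"
    "a \<in> entry P ` {c \<in> cells P. snd c = j}" "b \<in> entry P ` {c \<in> cells P. snd c = j}"
  obtain i1 i2 where i: "i1 < length P" "j < length (P ! i1)" "a = P ! i1 ! j"
    "i2 < length P" "j < length (P ! i2)" "b = P ! i2 ! j"
    using prec(2,3) by (auto simp: cells_def entry_def)
  have d: "distinct (reading_word P)"
    using assms(2) by (simp add: reading_word_def)
  show "lt b a"
  proof (cases i1 i2 rule: linorder_cases)
    case less
    then show ?thesis
      using precedes_asym[OF d precedes_reading_word_rows[OF less i(4), of b a]] prec(1) i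
      by (simp add: nth_mem)
  next
    case equal
    then show ?thesis using precedes_asym[OF d prec(1)] prec(1) i by simp
  next
    case greater
    then show ?thesis using is_tableau_column_less[OF assms(1) greater i(1,2)] i by simp
  qed
qed

lemma chain_meets_column_once:
  assumes "is_tableau P" "is_chain lt (reading_word P) S"
    and "(i, j) \<in> cells P" "(i', j) \<in> cells P" "P ! i ! j \<in> S" "P ! i' ! j \<in> S"
  shows "i = i'"
proof -
  have no_two: False if "i1 < i2" "(i2, j) \<in> cells P" "P ! i1 ! j \<in> S" "P ! i2 ! j \<in> S" for i1 i2
  proof -
    have "j < length (P ! i1)" "lt (P ! i1 ! j) (P ! i2 ! j)"
      using is_tableau_column_less[OF assms(1) that(1)] that(2) by (auto simp: cells_def)
    moreover have "precedes (reading_word P) (P ! i2 ! j) (P ! i1 ! j)"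
      using that(2) calculation(1) unfolding cells_def
      by (intro precedes_reading_word_rows[OF that(1)]) (auto intro: nth_mem)
    ultimately show False
      using is_chain_precedes[OF assms(2)] that(3,4) lt_asym by blast
  qed
  show ?thesis
    using no_two[of i i'] no_two[of i' i] assms(3-6) by (cases i i' rule: linorder_cases) simp_all
qed

lemma converse_chain_meets_row_once:
  assumes "is_tableau P" "is_chain (\<lambda>a b. lt b a) (reading_word P) S"
    and "(i, j) \<in> cells P" "(i, j') \<in> cells P" "P ! i ! j \<in> S" "P ! i ! j' \<in> S"
  shows "j = j'"
proof -
  have no_two: False if "j1 < j2" "j2 < length (P ! i)" "P ! i ! j1 \<in> S" "P ! i ! j2 \<in> S" for j1 j2
  proof -
    have "i < length P" using assms(3) by (simp add: cells_def)
    then have "lt (P ! i ! j1) (P ! i ! j2)" "precedes (reading_word P) (P ! i ! j1) (P ! i ! j2)"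
      using sorted_nth_less is_tableau_row[OF assms(1)] precedes_reading_word_row that(1,2) by blast+
    then show False
      using is_chain_precedes[OF assms(2)] that(3,4) lt_asym by blast
  qed
  have "j < length (P ! i)" "j' < length (P ! i)"
    using assms(3,4) by (simp_all add: cells_def)
  then show ?thesis
    using no_two[of j j'] no_two[of j' j] assms(5,6) by (cases j j' rule: linorder_cases) simp_all
qed

end

lemma card_entries_le_greene:
  assumes "distinct (concat P)" "\<forall>i<k. is_chain lt' (reading_word P) (C i)"
    and "\<And>c. c \<in> Z \<Longrightarrow> c \<in> cells P \<and> entry P c \<in> (\<Union>i<k. C i)"
  shows "card Z \<le> greene lt' k (reading_word P)"
proof -
  have "entry P ` Z \<subseteq> set (reading_word P) \<inter> (\<Union>i<k. C i)"
    using assms(3) entry_cells[of P] by (auto simp: reading_word_def)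
  then have "card (entry P ` Z) \<le> card (set (reading_word P) \<inter> (\<Union>i<k. C i))"
    by (intro card_mono) auto
  moreover have "card (entry P ` Z) = card Z"
    using inj_on_entry[OF assms(1)] assms(3) by (intro card_image) (meson inj_on_subset subsetI)
  ultimately show ?thesis
    using card_family_le_greene[OF assms(2)] by linarith
qed

section \<open>Conjugate shapes\<close>

context strict_total_order
begin

lemma card_column_of_chains_le:
  assumes "is_tableau P" "\<forall>l<k. is_chain lt (reading_word P) (C l)"
    and "\<forall>c\<in>X. c \<in> cells P \<and> entry P c \<in> (\<Union>l<k. C l)"
  shows "card {i. (i, j) \<in> X} \<le> card {i. (i, j) \<in> cells P \<and> i < k}"
proof -
  let ?col = "{i. (i, j) \<in> cells P}"
  have fin: "finite ?col"
    by (rule finite_subset[of _ "fst ` cells P"]) (force, simp add: finite_cells)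
  have "?col = {..<card ?col}"
  proof (rule down_closed_eq_lessThan[OF fin])
    fix i i' assume "i < i'" "i' \<in> ?col"
    then show "i \<in> ?col"
      using is_tableau_column_less[OF assms(1) \<open>i < i'\<close>] by (simp add: cells_def)
  qed
  then obtain c where c: "?col = {..<c}" "card ?col = c" by auto
  then have col_k: "{i. (i, j) \<in> cells P \<and> i < k} = {..<min c k}"
    by (auto simp: set_eq_iff)
  have "card {i. (i, j) \<in> X} \<le> card ?col"
    using assms(3) fin by (intro card_mono) auto
  moreover have "card {i. (i, j) \<in> X} \<le> k"
  proof (rule card_le_of_cover_by_subsingletons[where A = "\<lambda>l. {i. P ! i ! j \<in> C l}"])
    show "finite {i. (i, j) \<in> X}"
      by (rule finite_subset[OF _ fin]) (use assms(3) in auto)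
    show "{i. (i, j) \<in> X} \<subseteq> (\<Union>l<k. {i. P ! i ! j \<in> C l})"
      using assms(3) unfolding entry_def by fastforce
    show "a = b" if "l < k" "a \<in> {i. P ! i ! j \<in> C l} \<inter> {i. (i, j) \<in> X}"
      "b \<in> {i. P ! i ! j \<in> C l} \<inter> {i. (i, j) \<in> X}" for l a b
    proof -
      have "(a, j) \<in> cells P" "(b, j) \<in> cells P" using that assms(3) by auto
      then show ?thesis
        using chain_meets_column_once[OF assms(1) assms(2)[rule_format, OF that(1)]] that by blast
    qed
  qed
  ultimately show ?thesis unfolding col_k c(2)[symmetric] by simp
qed

lemma card_row_of_converse_chains_le:
  assumes "is_tableau P" "\<forall>l<k. is_chain (\<lambda>a b. lt b a) (reading_word P) (C l)"
    and "\<forall>c\<in>X. c \<in> cells P \<and> entry P c \<in> (\<Union>l<k. C l)" "i < length P"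
  shows "card {j. (i, j) \<in> X} \<le> card {j. (i, j) \<in> cells P \<and> j < k}"
proof -
  have row_k: "{j. (i, j) \<in> cells P \<and> j < k} = {..<min (length (P ! i)) k}"
    using assms(4) by (auto simp: cells_def)
  have sub: "{j. (i, j) \<in> X} \<subseteq> {..<length (P ! i)}"
    using assms(3) by (auto simp: cells_def)
  then have "card {j. (i, j) \<in> X} \<le> length (P ! i)"
    by (metis card_lessThan card_mono finite_lessThan)
  moreover have "card {j. (i, j) \<in> X} \<le> k"
  proof (rule card_le_of_cover_by_subsingletons[where A = "\<lambda>l. {j. P ! i ! j \<in> C l}"])
    show "finite {j. (i, j) \<in> X}"
      by (rule finite_subset[OF sub]) (auto simp: cells_def)
    show "{j. (i, j) \<in> X} \<subseteq> (\<Union>l<k. {j. P ! i ! j \<in> C l})"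
      using assms(3) unfolding entry_def by fastforce
    show "a = b" if "l < k" "a \<in> {j. P ! i ! j \<in> C l} \<inter> {j. (i, j) \<in> X}"
      "b \<in> {j. P ! i ! j \<in> C l} \<inter> {j. (i, j) \<in> X}" for l a b
    proof -
      have "(i, a) \<in> cells P" "(i, b) \<in> cells P" using that assms(3) by auto
      then show ?thesis
        using converse_chain_meets_row_once[OF assms(1) assms(2)[rule_format, OF that(1)]] that by blast
    qed
  qed
  ultimately show ?thesis unfolding row_k by simp
qed

lemma greene_reading_word_le:
  assumes "is_tableau P" "distinct (concat P)"
  shows "greene lt k (reading_word P) \<le> (\<Sum>i<min k (length P). length (P ! i))"
proof -
  obtain T where T: "chain_union lt k (reading_word P) T" "card T = greene lt k (reading_word P)"
    by (rule greene_attained)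
  then obtain C where C: "\<forall>l<k. is_chain lt (reading_word P) (C l)" "T \<subseteq> (\<Union>l<k. C l)"
    unfolding chain_union_def by blast
  let ?X = "{c \<in> cells P. entry P c \<in> T}" and ?Y = "{c \<in> cells P. fst c < k}"
  have X: "\<forall>c\<in>?X. c \<in> cells P \<and> entry P c \<in> (\<Union>l<k. C l)"
    using C(2) by blast
  have "card ?X = (\<Sum>j\<in>snd ` cells P. card {i. (i, j) \<in> ?X})"
    by (rule card_eq_sum_snd_fibres) (auto simp: finite_cells)
  also have "\<dots> \<le> (\<Sum>j\<in>snd ` cells P. card {i. (i, j) \<in> ?Y})"
    using card_column_of_chains_le[OF assms(1) C(1) X] by (intro sum_mono) simp
  also have "\<dots> = card ?Y"
    by (rule card_eq_sum_snd_fibres[symmetric]) (auto simp: finite_cells)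
  finally show ?thesis
    using T card_chain_union_eq_card_cells[OF T(1) assms(2)] by (simp add: card_cells_first_rows)
qed

lemma converse_greene_reading_word_le:
  assumes "is_tableau P" "distinct (concat P)"
  shows "greene (\<lambda>a b. lt b a) k (reading_word P) \<le> (\<Sum>i<length P. min k (length (P ! i)))"
proof -
  obtain T where T: "chain_union (\<lambda>a b. lt b a) k (reading_word P) T"
    "card T = greene (\<lambda>a b. lt b a) k (reading_word P)"
    by (rule greene_attained)
  then obtain C where C: "\<forall>l<k. is_chain (\<lambda>a b. lt b a) (reading_word P) (C l)" "T \<subseteq> (\<Union>l<k. C l)"
    unfolding chain_union_def by blast
  let ?X = "{c \<in> cells P. entry P c \<in> T}" and ?Y = "{c \<in> cells P. snd c < k}"
  have X: "\<forall>c\<in>?X. c \<in> cells P \<and> entry P c \<in> (\<Union>l<k. C l)"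
    using C(2) by blast
  have "card ?X = (\<Sum>i\<in>fst ` cells P. card {j. (i, j) \<in> ?X})"
    by (rule card_eq_sum_fst_fibres) (auto simp: finite_cells)
  also have "\<dots> \<le> (\<Sum>i\<in>fst ` cells P. card {j. (i, j) \<in> ?Y})"
    using card_row_of_converse_chains_le[OF assms(1) C(1) X] by (intro sum_mono) (auto simp: cells_def)
  also have "\<dots> = card ?Y"
    by (rule card_eq_sum_fst_fibres[symmetric]) (auto simp: finite_cells)
  finally show ?thesis
    using T card_chain_union_eq_card_cells[OF T(1) assms(2)] by (simp add: card_cells_first_columns)
qed

lemma greene_reading_word:
  assumes "is_tableau P" "distinct (concat P)"
  shows "greene lt k (reading_word P) = (\<Sum>i<min k (length P). length (P ! i))"
proof (rule antisym[OF greene_reading_word_le[OF assms]])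
  define C where "C i = (if i < length P then set (P ! i) else {})" for i
  have chains: "\<forall>i<k. is_chain lt (reading_word P) (C i)"
    using row_is_chain[OF assms] by (simp add: C_def is_chain_def)
  have cover: "c \<in> cells P \<and> entry P c \<in> (\<Union>i<k. C i)" if "c \<in> {c \<in> cells P. fst c < k}" for c
    using that by (force simp: C_def cells_def entry_def)
  have "card {c \<in> cells P. fst c < k} \<le> greene lt k (reading_word P)"
    by (rule card_entries_le_greene[OF assms(2) chains cover])
  then show "(\<Sum>i<min k (length P). length (P ! i)) \<le> greene lt k (reading_word P)"
    by (simp add: card_cells_first_rows)
qed

lemma converse_greene_reading_word:
  assumes "is_tableau P" "distinct (concat P)"
  shows "greene (\<lambda>a b. lt b a) k (reading_word P) = (\<Sum>i<length P. min k (length (P ! i)))"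
proof (rule antisym[OF converse_greene_reading_word_le[OF assms]])
  define C where "C j = entry P ` {c \<in> cells P. snd c = j}" for j
  have chains: "\<forall>j<k. is_chain (\<lambda>a b. lt b a) (reading_word P) (C j)"
    using column_is_converse_chain[OF assms] by (simp add: C_def)
  have cover: "c \<in> cells P \<and> entry P c \<in> (\<Union>j<k. C j)" if "c \<in> {c \<in> cells P. snd c < k}" for c
    using that by (auto simp: C_def)
  have "card {c \<in> cells P. snd c < k} \<le> greene (\<lambda>a b. lt b a) k (reading_word P)"
    by (rule card_entries_le_greene[OF assms(2) chains cover])
  then show "(\<Sum>i<length P. min k (length (P ! i))) \<le> greene (\<lambda>a b. lt b a) k (reading_word P)"
    by (simp add: card_cells_first_columns)
qed

lemma insertion_tableau_partial_sums:
  assumes "distinct w"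
  shows "(\<Sum>i<min k (length (insertion_tableau lt w)). length (insertion_tableau lt w ! i)) =
    (\<Sum>i<length (insertion_tableau (\<lambda>a b. lt b a) w).
      min k (length (insertion_tableau (\<lambda>a b. lt b a) w ! i)))"
proof -
  interpret converse: strict_total_order "\<lambda>a b. lt b a" by (rule strict_total_order_converse)
  let ?P = "insertion_tableau lt w" and ?Q = "insertion_tableau (\<lambda>a b. lt b a) w"
  have dP: "distinct (concat ?P)" and dQ: "distinct (concat ?Q)"
    using assms by (simp_all add: distinct_concat_insertion_tableau)
  have "knuth_equiv lt (reading_word ?Q) w"
    using converse.insertion_tableau_knuth_equiv[OF assms] knuth_equiv_converse[of lt] by simp
  then have "greene lt k (reading_word ?Q) = greene lt k w"
    using dQ by (intro greene_knuth_equiv) (simp_all add: reading_word_def)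
  moreover have "greene lt k (reading_word ?P) = greene lt k w"
    using insertion_tableau_knuth_equiv[OF assms] dP
    by (intro greene_knuth_equiv) (simp_all add: reading_word_def)
  ultimately show ?thesis
    using greene_reading_word[OF insertion_tableau_is_tableau[OF assms] dP]
      converse.converse_greene_reading_word[OF converse.insertion_tableau_is_tableau[OF assms] dQ]
    by simp
qed

end

lemma less_fold_max_iff: "k < fold max xs a \<longleftrightarrow> k < a \<or> (\<exists>l\<in>set xs. k < l)"
  for k :: nat
  by (induction xs arbitrary: a) (auto simp: less_max_iff_disj)

lemma sum_min_Suc:
  "(\<Sum>i<length mu. min (Suc k) (mu ! i)) = (\<Sum>i<length mu. min k (mu ! i)) + length (filter (\<lambda>l. k < l) mu)"
proof (induction mu)
  case (Cons a mu)
  have "(\<Sum>i<length (a # mu). f ((a # mu) ! i)) = f a + (\<Sum>i<length mu. f (mu ! i))" for f :: "nat \<Rightarrow> nat"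
    by (simp only: length_Cons sum.lessThan_Suc_shift nth_Cons_0 nth_Cons_Suc)
  then show ?case using Cons by auto
qed simp

lemma eq_conj_part_if_partial_sums:
  assumes pos: "\<forall>x\<in>set lam. 0 < x"
    and sums: "\<And>k. (\<Sum>i<min k (length lam). lam ! i) = (\<Sum>i<length mu. min k (mu ! i))"
  shows "lam = conj_part mu"
proof -
  let ?L = "length lam" and ?cnt = "\<lambda>k. length (filter (\<lambda>l. k < l) mu)"
  \<comment> \<open>differences of consecutive partial sums\<close>
  have cnt: "?cnt k = (if k < ?L then lam ! k else 0)" for k
  proof -
    have "(\<Sum>i<min (Suc k) ?L. lam ! i) = (\<Sum>i<min k ?L. lam ! i) + (if k < ?L then lam ! k else 0)"
      by (cases "k < ?L") (simp_all add: min_def)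
    then show ?thesis using sums[of "Suc k"] sums[of k] sum_min_Suc[where mu = mu and k = k] by simp
  qed
  have "fold max mu 0 = ?L"
  proof (rule antisym)
    show "fold max mu 0 \<le> ?L"
    proof (rule ccontr)
      assume "\<not> fold max mu 0 \<le> ?L"
      then have "?L < fold max mu 0" by simp
      then obtain l where "l \<in> set mu" "?L < l" using less_fold_max_iff by auto
      then have "?cnt ?L > 0" by (metis filter_empty_conv length_greater_0_conv)
      then show False using cnt[of ?L] by simp
    qed
    show "?L \<le> fold max mu 0"
    proof (cases "?L = 0")
      case False
      then have "?cnt (?L - 1) > 0" using cnt[of "?L - 1"] pos by (simp add: nth_mem)
      then obtain l where "l \<in> set mu" "?L - 1 < l"
        by (metis (mono_tags, lifting) filter_empty_conv length_greater_0_conv)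
      then have "?L - 1 < fold max mu 0" using less_fold_max_iff by blast
      then show ?thesis by simp
    qed simp
  qed
  then show ?thesis
    using cnt by (intro nth_equalityI) (simp_all add: conj_part_def)
qed

context strict_total_order
begin

lemma shape_insertion_tableau_converse:
  assumes "distinct w"
  shows "map length (insertion_tableau lt w) = conj_part (map length (insertion_tableau (\<lambda>a b. lt b a) w))"
proof (rule eq_conj_part_if_partial_sums)
  show "\<forall>x\<in>set (map length (insertion_tableau lt w)). 0 < x"
    using is_tableau_row[OF insertion_tableau_is_tableau[OF assms]]
    by (auto simp: in_set_conv_nth)
  show "(\<Sum>i<min k (length (map length (insertion_tableau lt w))). map length (insertion_tableau lt w) ! i) =
      (\<Sum>i<length (map length (insertion_tableau (\<lambda>a b. lt b a) w)).
        min k (map length (insertion_tableau (\<lambda>a b. lt b a) w) ! i))" for k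
    using insertion_tableau_partial_sums[OF assms, of k] by simp
qed

end

section \<open>Standardisation\<close>

definition std_less :: "letter rel \<Rightarrow> (letter \<Rightarrow> bool) \<Rightarrow> letter \<times> nat \<Rightarrow> letter \<times> nat \<Rightarrow> bool" where
  "std_less r strict a b \<longleftrightarrow> (if fst a = fst b
     then (if strict (fst a) then snd a < snd b else snd b < snd a)
     else (fst a, fst b) \<in> r)"

locale standardization =
  fixes r :: "letter rel" and strict :: "letter \<Rightarrow> bool"
  assumes linear: "linear_order r"
begin

lemma r_refl: "(x, x) \<in> r"
  using linear unfolding linear_order_on_def partial_order_on_def preorder_on_def refl_on_def by blast

lemma r_antisym: "(x, y) \<in> r \<Longrightarrow> (y, x) \<in> r \<Longrightarrow> x = y"
  using linear unfolding linear_order_on_def partial_order_on_def antisym_def by blast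

sublocale strict_total_order "std_less r strict"
proof
  show "\<not> std_less r strict a a" for a
    by (simp add: std_less_def)
  show "std_less r strict a c" if "std_less r strict a b" "std_less r strict b c" for a b c
    using that r_antisym linear
    unfolding std_less_def linear_order_on_def partial_order_on_def preorder_on_def trans_def
    by (auto split: if_splits)
  show "std_less r strict a b \<or> std_less r strict b a" if "a \<noteq> b" for a b
    using that linear unfolding std_less_def linear_order_on_def total_on_def
    by (cases a, cases b) (auto split: if_splits)
qed

lemma std_less_interval:
  "std_less r strict a b \<Longrightarrow> std_less r strict b c \<Longrightarrow> fst a = fst c \<Longrightarrow> fst b = fst a"
  unfolding std_less_def using r_antisym by (auto split: if_splits)

lemma bumps_eq_std_less:
  "(fst b = fst a \<Longrightarrow> snd b < snd a) \<Longrightarrow> bumps r strict (fst a) (fst b) = std_less r strict a b"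
  using r_refl unfolding bumps_def std_less_def by auto

definition unique_nonstrict :: "(letter \<times> nat) list \<Rightarrow> bool" where
  "unique_nonstrict R \<longleftrightarrow> (\<forall>a\<in>set R. \<forall>b\<in>set R. fst a = fst b \<and> \<not> strict (fst a) \<longrightarrow> a = b)"

(* Invariant of inserting tagged letters in the order of their positions: a letter that does not
   bump strictly occurs at most once in a row, and an entry below an equal letter has a smaller
   position. *)
fun std_tableau :: "(letter \<times> nat) list list \<Rightarrow> bool" where
  "std_tableau [] = True"
| "std_tableau (R # T) \<longleftrightarrow> sorted_wrt (std_less r strict) R \<and> unique_nonstrict R \<and> std_tableau T \<and>
     (\<forall>e\<in>set R. \<forall>f\<in>set (concat T). fst e = fst f \<longrightarrow> snd f < snd e)"

lemma std_less_same_letter: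
  "fst a = fst b \<Longrightarrow> std_less r strict a b \<longleftrightarrow> (if strict (fst a) then snd a < snd b else snd b < snd a)"
  by (simp add: std_less_def)

lemma unique_nonstrict_bump:
  assumes R: "sorted_wrt (std_less r strict) (a @ z # b)" "unique_nonstrict (a @ z # b)"
    and g: "\<forall>f\<in>set (a @ z # b). fst f = fst g \<longrightarrow> snd f < snd g"
    and a: "\<forall>c\<in>set a. std_less r strict c g" and gz: "std_less r strict g z"
  shows "unique_nonstrict (a @ g # b)"
proof -
  have no_g: "e \<notin> set a \<union> set b" if "fst e = fst g" "\<not> strict (fst g)" for e
  proof
    assume "e \<in> set a \<union> set b"
    then consider "e \<in> set a" | "e \<in> set b" by blast
    then show False
    proof cases
      case 1
      then show False using a g that std_less_same_letter[of e g] by auto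
    next
      case 2
      then have "std_less r strict z e" "z \<noteq> e"
        using R(1) lt_irrefl[of z] by (auto simp: sorted_wrt_append)
      moreover from this(1) have "fst z = fst g"
        using std_less_interval[OF gz] that(1) by simp
      ultimately show False
        using R(2) 2 that unfolding unique_nonstrict_def by auto
    qed
  qed
  show ?thesis
    unfolding unique_nonstrict_def
  proof (intro ballI impI)
    fix e e' assume e: "e \<in> set (a @ g # b)" "e' \<in> set (a @ g # b)" "fst e = fst e' \<and> \<not> strict (fst e)"
    show "e = e'"
    proof (cases "e = g \<or> e' = g")
      case True
      then show ?thesis using no_g[of e] no_g[of e'] e by auto
    next
      case False
      then show ?thesis using R(2) e unfolding unique_nonstrict_def by auto
    qed
  qed
qed

lemma bumped_before_equal_letters:
  assumes R: "sorted_wrt (std_less r strict) (a @ z # b)" "unique_nonstrict (a @ z # b)"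
    and g: "\<forall>f\<in>set (a @ z # b). fst f = fst g \<longrightarrow> snd f < snd g"
    and a: "\<forall>c\<in>set a. std_less r strict c g" and gz: "std_less r strict g z"
    and e: "e \<in> set (a @ g # b)" "fst e = fst z"
  shows "snd z < snd e"
proof -
  have same_z: "e' = z" if "e' \<in> set (a @ z # b)" "fst e' = fst z" "\<not> strict (fst z)" for e'
    using bspec[OF bspec[OF R(2)[unfolded unique_nonstrict_def] that(1)], of z] that by simp
  have g_z: "fst g = fst z \<Longrightarrow> \<not> strict (fst z) \<and> snd z < snd g"
    using gz g std_less_same_letter[of g z] by auto
  consider "e = g" | "e \<in> set a" | "e \<in> set b" using e(1) by auto
  then show ?thesis
  proof cases
    case 1
    then show ?thesis using g_z e(2) by simp
  next
    case 2
    then have "std_less r strict e z" "z \<notin> set a"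
      using R(1) lt_irrefl[of z] by (auto simp: sorted_wrt_append)
    moreover have "fst g = fst e"
      using std_less_interval[OF a[rule_format, OF 2] gz] e(2) by simp
    ultimately show ?thesis
      using same_z[of e] g_z 2 e(2) by auto
  next
    case 3
    then have "std_less r strict z e" "z \<notin> set b"
      using R(1) lt_irrefl[of z] by (auto simp: sorted_wrt_append)
    then show ?thesis
      using same_z[of e] 3 e(2) std_less_same_letter[of z e] by (auto split: if_splits)
  qed
qed

lemma row_insert_std:
  assumes R: "sorted_wrt (std_less r strict) R" "unique_nonstrict R"
    and g: "\<forall>f\<in>set R. fst f = fst g \<longrightarrow> snd f < snd g"
  defines "ins \<equiv> row_insert (std_less r strict) g R"
  shows "row_insert (\<lambda>a b. bumps r strict (fst a) (fst b)) g R = ins"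
    and "sorted_wrt (std_less r strict) (fst ins)" "unique_nonstrict (fst ins)"
    and "\<And>z e. snd ins = Some z \<Longrightarrow> e \<in> set (fst ins) \<Longrightarrow> fst e = fst z \<Longrightarrow> snd z < snd e"
proof -
  let ?lt = "std_less r strict"
  show "row_insert (\<lambda>a b. bumps r strict (fst a) (fst b)) g R = ins"
    unfolding ins_def using g by (intro row_insert_cong bumps_eq_std_less) auto
  have "g \<notin> set R" using g by auto
  then have "sorted_wrt ?lt (fst ins) \<and> unique_nonstrict (fst ins) \<and>
      (\<forall>z e. snd ins = Some z \<longrightarrow> e \<in> set (fst ins) \<longrightarrow> fst e = fst z \<longrightarrow> snd z < snd e)"
  proof (cases rule: row_insert_lt_cases)
    case append
    have "unique_nonstrict (R @ [g])"
      using R(2) append(2) g std_less_same_letter unfolding unique_nonstrict_def by fastforce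
    then show ?thesis
      using append R(1) by (simp add: ins_def sorted_wrt_append)
  next
    case (bump a z b)
    have sorted: "sorted_wrt ?lt (a @ g # b)"
      using R(1) bump(1,3,4) lt_trans by (auto simp: sorted_wrt_append)
    have Rb: "sorted_wrt ?lt (a @ z # b)" "unique_nonstrict (a @ z # b)"
      "\<forall>f\<in>set (a @ z # b). fst f = fst g \<longrightarrow> snd f < snd g"
      using R g bump(1) by simp_all
    have "\<forall>e\<in>set (a @ g # b). fst e = fst z \<longrightarrow> snd z < snd e"
      using bumped_before_equal_letters[OF Rb bump(3,4)] by blast
    then show ?thesis
      using sorted unique_nonstrict_bump[OF Rb bump(3,4)]
      unfolding ins_def bump(2) fst_conv snd_conv option.inject by blast
  qed
  then show "sorted_wrt ?lt (fst ins)" "unique_nonstrict (fst ins)"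
    "\<And>z e. snd ins = Some z \<Longrightarrow> e \<in> set (fst ins) \<Longrightarrow> fst e = fst z \<Longrightarrow> snd z < snd e"
    by blast+
qed

lemma tab_insert_std:
  assumes "std_tableau T" "\<forall>f\<in>set (concat T). fst f = fst g \<longrightarrow> snd f < snd g"
  shows "tab_insert (\<lambda>a b. bumps r strict (fst a) (fst b)) g T = tab_insert (std_less r strict) g T \<and>
    std_tableau (tab_insert (std_less r strict) g T)"
  using assms
proof (induction T arbitrary: g)
  case (Cons R T)
  let ?lt = "std_less r strict"
  have R: "sorted_wrt ?lt R" "unique_nonstrict R" "std_tableau T"
    "\<forall>e\<in>set R. \<forall>f\<in>set (concat T). fst e = fst f \<longrightarrow> snd f < snd e"
    using Cons.prems(1) by auto
  obtain R' c where ins: "row_insert ?lt g R = (R', c)" by fastforce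
  have "\<forall>f\<in>set R. fst f = fst g \<longrightarrow> snd f < snd g"
    using Cons.prems(2) by simp
  note row = row_insert_std[OF R(1,2) this, unfolded ins]
  have R': "set R' \<union> set_option c = insert g (set R)"
    using arg_cong[OF mset_row_insert[of ?lt g R], of set_mset] ins by simp
  have below: "snd f < snd e" if "e \<in> set R'" "f \<in> set (concat T)" "fst e = fst f" for e f
  proof -
    have "e = g \<or> e \<in> set R" using that(1) R' by blast
    then show ?thesis using that(2,3) R(4) Cons.prems(2) by auto
  qed
  show ?case
  proof (cases c)
    case None
    have "tab_insert (\<lambda>a b. bumps r strict (fst a) (fst b)) g (R # T) = R' # T"
      "tab_insert ?lt g (R # T) = R' # T"
      using row(1) ins None by simp_all
    moreover have "std_tableau (R' # T)"
      using row(2,3) R(3) below by simp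
    ultimately show ?thesis by simp
  next
    case (Some z)
    have "z \<in> set R" using row_insert_bumped_mem[of ?lt g R z] ins Some by simp
    then have "\<forall>f\<in>set (concat T). fst f = fst z \<longrightarrow> snd f < snd z"
      using bspec[OF R(4)] by auto
    note IH = Cons.IH[OF R(3) this, THEN conjunct1] Cons.IH[OF R(3) this, THEN conjunct2]
    have "tab_insert (\<lambda>a b. bumps r strict (fst a) (fst b)) g (R # T) = R' # tab_insert ?lt z T"
      "tab_insert ?lt g (R # T) = R' # tab_insert ?lt z T"
      using row(1) ins Some IH(1) by simp_all
    moreover have "snd f < snd e"
      if "e \<in> set R'" "f \<in> set (concat (tab_insert ?lt z T))" "fst e = fst f" for e f
    proof -
      have "f = z \<or> f \<in> set (concat T)"
        using that(2) arg_cong[OF mset_concat_tab_insert[of ?lt z T], of set_mset] by auto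
      then show ?thesis
      proof
        assume "f = z"
        then show ?thesis using row(4)[of z e] Some that(1,3) by simp
      qed (rule below[OF that(1) _ that(3)])
    qed
    then have "std_tableau (R' # tab_insert ?lt z T)"
      using row(2,3) IH(2) by simp
    ultimately show ?thesis by simp
  qed
qed (simp add: unique_nonstrict_def)

lemma insertion_tableau_std:
  assumes "sorted_wrt (\<lambda>a b. snd a < snd b) w"
  shows "insertion_tableau (\<lambda>a b. bumps r strict (fst a) (fst b)) w = insertion_tableau (std_less r strict) w \<and>
    std_tableau (insertion_tableau (std_less r strict) w)"
  using assms
proof (induction w rule: rev_induct)
  case (snoc g w)
  have "\<forall>f\<in>set (concat (insertion_tableau (std_less r strict) w)). fst f = fst g \<longrightarrow> snd f < snd g"
    using snoc.prems set_concat_insertion_tableau[of "std_less r strict" w]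
    by (auto simp: sorted_wrt_append)
  then show ?case
    using tab_insert_std snoc by (simp add: insertion_tableau_snoc sorted_wrt_append)
qed simp

lemma shape_RSK_std:
  "shape (RSK r strict w) = map length (insertion_tableau (std_less r strict) (zip w [0..<length w]))"
proof -
  let ?w = "zip w [0..<length w]"
  have "sorted_wrt (\<lambda>a b. snd a < snd b) ?w"
    by (simp add: sorted_wrt_iff_nth_less)
  moreover have "insertion_tableau (bumps r strict) (map fst ?w) =
      map (map fst) (insertion_tableau (\<lambda>a b. bumps r strict (fst a) (fst b)) ?w)"
    by (rule insertion_tableau_map) simp
  then have "RSK r strict w = map (map fst) (insertion_tableau (\<lambda>a b. bumps r strict (fst a) (fst b)) ?w)"
    by (simp add: RSK_eq_insertion_tableau)
  ultimately show ?thesis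
    using insertion_tableau_std by (simp add: shape_def)
qed

end

lemma distinct_filter_nth_eq:
  assumes "distinct (filter P w)" "i < length w" "j < length w" "w ! i = w ! j" "P (w ! i)"
  shows "i = j"
  using assms
proof (induction w arbitrary: i j)
  case (Cons c w)
  have c_notin: "c \<notin> set (filter P w)" if "P c"
    using Cons.prems(1) that by simp
  show ?case
  proof (cases i; cases j)
    fix i' j' assume "i = Suc i'" "j = Suc j'"
    then show ?thesis
      using Cons.IH[of i' j'] Cons.prems by (cases "P c") auto
  qed (use Cons.prems c_notin in \<open>auto dest: nth_mem\<close>)
qed simp

lemma std_less_converse:
  assumes "distinct (filter is_G w)" "a \<in> set (zip w [0..<length w])" "b \<in> set (zip w [0..<length w])"
  shows "std_less (r\<inverse>) is_LO a b = std_less r is_LE b a"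
proof -
  obtain i j where ij: "i < length w" "j < length w" "a = (w ! i, i)" "b = (w ! j, j)"
    using assms(2,3) by (auto simp: set_zip)
  show ?thesis
  proof (cases "w ! i = w ! j")
    case True
    show ?thesis
    proof (cases "w ! i")
      case (GL s)
      then have "i = j"
        using distinct_filter_nth_eq[OF assms(1) ij(1,2) True] by simp
      then show ?thesis using ij by (simp add: std_less_def)
    qed (use ij True in \<open>auto simp: std_less_def\<close>)
  qed (use ij in \<open>auto simp: std_less_def\<close>)
qed

theorem lemma3:
  fixes r :: "letter rel" and w :: "letter list"
  assumes "admissible r"
    and "distinct (filter is_G w)"
  shows "phi r w = conj_part (phi_t r w)"
proof -
  have lin: "linear_order r" using assms(1) unfolding admissible_def by blast
  interpret std: standardization r is_LE by unfold_locales (rule lin)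
  interpret std_t: standardization "r\<inverse>" is_LO by unfold_locales (use lin in simp)
  let ?w = "zip w [0..<length w]"
  have "phi r w = map length (insertion_tableau (std_less r is_LE) ?w)"
    unfolding phi_def by (rule std.shape_RSK_std)
  also have "\<dots> = conj_part (map length (insertion_tableau (\<lambda>a b. std_less r is_LE b a) ?w))"
    by (rule std.shape_insertion_tableau_converse) (simp add: distinct_zipI2)
  also have "insertion_tableau (\<lambda>a b. std_less r is_LE b a) ?w = insertion_tableau (std_less (r\<inverse>) is_LO) ?w"
    by (rule insertion_tableau_cong) (simp add: std_less_converse[OF assms(2)])
  also have "map length \<dots> = phi_t r w"
    unfolding phi_t_def by (rule std_t.shape_RSK_std[symmetric])
  finally show ?thesis .
qed

end
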